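(* Let $A$ be a CFG-ring and let $n,m\ge 1$. (1) A subset $U\subseteq A^{n}$ is an algebraic variety if and only if $U$, equipped with the restriction of the metric $d$ of $A^n$, is a CFG-space over $B(A)$. (2) If $U\subseteq A^{n}$ and $V\subseteq A^{m}$ are algebraic varieties, a map $f:U\to V$ is a polynomial map if and only if it is contractive, i.e. $d(f(x),f(y))\le d(x,y)$ for all $x,y\in U$.
   Context: All rings are commutative with identity. A regular ring is a commutative von Neumann regular ring: every principal ideal is generated by an idempotent. For a regular ring $A$, $B(A)$ denotes the set of idempotents of $A$, which is a Boolean ring with the product of $A$ and the sum $a\tilde{+}b=(a-b)^2$; in it $a\vee b=a+b-ab$, $a\le b\iff ab=a$, $\bar a=1-a$. For $a\in A$, $e(a)$ denotes the unique idempotent with $aA=e(a)A$. For pairwise disjoint idempotents $a_1,\dots,a_k$ (i.e. $a_ia_j=0$ for $i\ne j$), $a_1\oplus\cdots\oplus a_k$ denotes their sum (which equals their join). $A^n$ carries the map $d:A^n\times A^n\to B(A)$, $d((x_1,\dots,x_n),(y_1,\dots,y_n))=e(x_1-y_1)\vee\cdots\vee e(x_n-y_n)$, which is a Boolean metric over $B(A)$. A Boolean metric space over a Boolean ring $B$ is a set $X$ with $d:X\times X\to B$ such that $d(x,y)=0\iff x=y$, $d(x,y)=d(y,x)$, and $d(x,z)\le d(x,y)\vee d(y,z)$. Given $x_1,\dots,x_k\in X$ and $a_1,\dots,a_k\in B$ with $a_1\oplus\cdots\oplus a_k=1$, an element $x\in X$ is a convex combination of the $x_i$ with coefficients $a_i$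 if $a_i d(x,x_i)=0$ for all $i$ (such $x$ is unique if it exists). $X$ is convex if every such convex combination exists in $X$. A CFG-space is a metric space $X$ over $B$ which is convex and for which there is a finite subset $F\subseteq X$ such that every element of $X$ is a convex combination of elements of $F$. A CFG-ring is a regular ring $A$ such that $A$ with the metric $d(x,y)=e(x-y)$ is a CFG-space over $B(A)$ (e.g. every $p$-ring). An algebraic variety in $A^n$ is the set of common zeros of finitely many polynomials in $A[X_1,\dots,X_n]$. A map $f:U\to V$ between algebraic varieties $U\subseteq A^n$, $V\subseteq A^m$ is a polynomial map if there are $f_1,\dots,f_m\in A[X_1,\dots,X_n]$ with $f(x)=(f_1(x),\dots,f_m(x))$ for all $x\in U$. *)

theory Defs
  imports "HOL-Analysis.Analysis"
begin

text \<open>The ring A is the whole carrier of a type 'a of class comm_ring_1.\<close>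

definition idems :: "'a::comm_ring_1 set" where
  "idems = {e. e * e = e}"

definition regular_ring :: "'a::comm_ring_1 itself \<Rightarrow> bool" where
  "regular_ring _ \<longleftrightarrow>
     (\<forall>a::'a. \<exists>e. e * e = e \<and> (\<forall>y. (\<exists>r. y = a * r) \<longleftrightarrow> (\<exists>r. y = e * r)))"

definition eid :: "'a::comm_ring_1 \<Rightarrow> 'a" where
  "eid a = (THE e. e * e = e \<and> (\<forall>y. (\<exists>r. y = a * r) \<longleftrightarrow> (\<exists>r. y = e * r)))"

definition bjoin :: "'a::comm_ring_1 \<Rightarrow> 'a \<Rightarrow> 'a" where
  "bjoin a b = a + b - a * b"

definition bleq :: "'a::comm_ring_1 \<Rightarrow> 'a \<Rightarrow> bool" where
  "bleq a b \<longleftrightarrow> a * b = a"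

definition bmetric_space :: "'x set \<Rightarrow> ('x \<Rightarrow> 'x \<Rightarrow> 'a::comm_ring_1) \<Rightarrow> bool" where
  "bmetric_space X d \<longleftrightarrow>
     (\<forall>x\<in>X. \<forall>y\<in>X. d x y \<in> idems) \<and>
     (\<forall>x\<in>X. \<forall>y\<in>X. d x y = 0 \<longleftrightarrow> x = y) \<and>
     (\<forall>x\<in>X. \<forall>y\<in>X. d x y = d y x) \<and>
     (\<forall>x\<in>X. \<forall>y\<in>X. \<forall>z\<in>X. bleq (d x z) (bjoin (d x y) (d y z)))"

definition coeffs_ok :: "'a::comm_ring_1 list \<Rightarrow> bool" where
  "coeffs_ok as \<longleftrightarrow>
     (\<forall>i<length as. as ! i \<in> idems) \<and>
     (\<forall>i<length as. \<forall>j<length as. i \<noteq> j \<longrightarrow> as ! i * as ! j = 0) \<and>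
     sum_list as = 1"

definition convex_comb ::
  "('x \<Rightarrow> 'x \<Rightarrow> 'a::comm_ring_1) \<Rightarrow> 'x \<Rightarrow> 'x list \<Rightarrow> 'a list \<Rightarrow> bool" where
  "convex_comb d x xs as \<longleftrightarrow>
     length xs = length as \<and> (\<forall>i<length as. as ! i * d x (xs ! i) = 0)"

definition bconvex :: "'x set \<Rightarrow> ('x \<Rightarrow> 'x \<Rightarrow> 'a::comm_ring_1) \<Rightarrow> bool" where
  "bconvex X d \<longleftrightarrow>
     (\<forall>xs as. set xs \<subseteq> X \<and> length xs = length as \<and> coeffs_ok as \<longrightarrow>
        (\<exists>x\<in>X. convex_comb d x xs as))"

definition cfg_space :: "'x set \<Rightarrow> ('x \<Rightarrow> 'x \<Rightarrow> 'a::comm_ring_1) \<Rightarrow> bool" where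
  "cfg_space X d \<longleftrightarrow>
     bmetric_space X d \<and> bconvex X d \<and>
     (\<exists>F. finite F \<and> F \<subseteq> X \<and>
        (\<forall>x\<in>X. \<exists>xs as. set xs \<subseteq> F \<and> length xs = length as \<and> coeffs_ok as \<and>
                         convex_comb d x xs as))"

definition cfg_ring :: "'a::comm_ring_1 itself \<Rightarrow> bool" where
  "cfg_ring T \<longleftrightarrow> regular_ring T \<and> cfg_space (UNIV :: 'a set) (\<lambda>x y. eid (x - y))"

text \<open>A^n is rendered as 'a ^ 'n for a finite index type 'n with n = CARD('n).
  d(x,y) = e(x_1 - y_1) \/ ... \/ e(x_n - y_n).\<close>
definition dvec :: "'a::comm_ring_1 ^ 'n \<Rightarrow> 'a ^ 'n \<Rightarrow> 'a" where
  "dvec x y = Finite_Set.fold (\<lambda>i acc. bjoin (eid (x $ i - y $ i)) acc) 0 (UNIV :: 'n set)"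

text \<open>Functions A^n -> A given by evaluating a polynomial of A[X_1,...,X_n]:
  generated by constants and coordinate functions under + and *.\<close>
inductive_set poly_funs :: "('a::comm_ring_1 ^ 'n \<Rightarrow> 'a) set" where
  pf_const: "(\<lambda>x. c) \<in> poly_funs"
| pf_var: "(\<lambda>x. x $ i) \<in> poly_funs"
| pf_add: "p \<in> poly_funs \<Longrightarrow> q \<in> poly_funs \<Longrightarrow> (\<lambda>x. p x + q x) \<in> poly_funs"
| pf_mult: "p \<in> poly_funs \<Longrightarrow> q \<in> poly_funs \<Longrightarrow> (\<lambda>x. p x * q x) \<in> poly_funs"

definition algebraic_variety :: "('a::comm_ring_1 ^ 'n) set \<Rightarrow> bool" where
  "algebraic_variety U \<longleftrightarrow>
     (\<exists>P. finite P \<and> P \<subseteq> poly_funs \<and> U = {x. \<forall>p\<in>P. p x = 0})"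

definition polynomial_map ::
  "('a::comm_ring_1 ^ 'n) set \<Rightarrow> ('a ^ 'n \<Rightarrow> 'a ^ 'm) \<Rightarrow> bool" where
  "polynomial_map U f \<longleftrightarrow>
     (\<exists>p :: 'm \<Rightarrow> ('a ^ 'n \<Rightarrow> 'a). (\<forall>j. p j \<in> poly_funs) \<and>
        (\<forall>x\<in>U. \<forall>j. f x $ j = p j x))"

end

theory Submission
  imports Defs
begin

(* Everything rests on the dictionary between idempotents and agreement:
   in a regular ring e(a) and a have the same annihilator, so c \<cdot> d(x,y) = 0 iff x and y
   coincide coordinatewise "on c", and polynomials preserve such local coincidences.

   1. Algebra of idempotents, e(a), and partitions of unity (orthogonal idempotents
      summing to 1), including products and regroupings of partitions.
   2. A CFG-ring has a finite set F such that every element is locally in F; by a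
      pigeonhole argument on the powers of an element together with reducedness, this gives
      a uniform identity a^(P+1) = a, hence e(a) = a^P is a polynomial in a.
   3. d is a Boolean metric on A^n, with 1 - d(x,y) the idempotent where x and y agree.
   4. A variety is convex (convex combinations commute with polynomials) and finitely
      generated (points with coordinates in F glued with a fixed point of the variety).
   5. Conversely, with finitely many generators u_l, a CFG-subspace is the zero set of the
      polynomial prod_l d(x,u_l), and a contractive map is given by the polynomials
      sum_l q_l(x) f(u_l), where q_l are the disjointified agreement idempotents of x and u_l. *)

lemma idem_mult:
  "(a::'a::comm_ring_1) * a = a \<Longrightarrow> b * b = b \<Longrightarrow> (a * b) * (a * b) = a * b"
  by (metis mult.assoc mult.commute)

lemma idem_compl: "(a::'a::comm_ring_1) * a = a \<Longrightarrow> (1 - a) * (1 - a) = 1 - a"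
  by (simp add: algebra_simps)

lemma idem_prod:
  "(\<And>i. i \<in> S \<Longrightarrow> (f i::'a::comm_ring_1) * f i = f i) \<Longrightarrow> prod f S * prod f S = prod f S"
  by (induction S rule: infinite_finite_induct) (simp_all add: idem_mult)

lemma idem_power: "(e::'a::comm_ring_1) * e = e \<Longrightarrow> K \<ge> 1 \<Longrightarrow> e ^ K = e"
proof (induction K)
  case (Suc k) then show ?case by (cases "k = 0") (auto simp: power_Suc2)
qed simp

lemma prod_factor_absorb:
  assumes "finite I" "i \<in> I" "\<And>j. j \<in> I \<Longrightarrow> (c j::'a::comm_ring_1) * c j = c j"
  shows "prod c I * c i = prod c I"
proof -
  have "prod c I = c i * prod c (I - {i})" using assms(1,2) by (simp add: prod.remove)
  then show ?thesis using assms(3)[OF assms(2)] by (metis mult.assoc mult.commute)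
qed

lemma prod_fixes:
  "(\<And>i. i \<in> S \<Longrightarrow> (c::'a::comm_ring_1) * f i = c) \<Longrightarrow> c * prod f S = c"
  by (induction S rule: infinite_finite_induct) (simp_all add: mult.assoc[symmetric])

lemma coincide_below:
  assumes "c * e = c" "e * a = e * (b::'a::comm_ring_1)"
  shows "c * a = c * b"
  by (metis assms mult.assoc)

lemma same_principal_ideal:
  "(\<forall>y. (\<exists>r. y = a * r) \<longleftrightarrow> (\<exists>r. y = b * r)) \<longleftrightarrow>
   (\<exists>r. a = b * r) \<and> (\<exists>s. b = (a::'a::comm_ring_1) * s)"
proof
  assume "\<forall>y. (\<exists>r. y = a * r) \<longleftrightarrow> (\<exists>r. y = b * r)"
  from this[rule_format, of a] this[rule_format, of b]
  show "(\<exists>r. a = b * r) \<and> (\<exists>s. b = a * s)" by (metis mult_1_right)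
next
  assume "(\<exists>r. a = b * r) \<and> (\<exists>s. b = a * s)"
  then obtain r s where "a = b * r" "b = a * s" by blast
  show "\<forall>y. (\<exists>r. y = a * r) \<longleftrightarrow> (\<exists>r. y = b * r)"
  proof (intro allI iffI)
    fix y assume "\<exists>t. y = a * t"
    then obtain t where "y = a * t" by blast
    then show "\<exists>t. y = b * t" using \<open>a = b * r\<close> by (intro exI[of _ "r * t"]) (simp add: mult.assoc)
  next
    fix y assume "\<exists>t. y = b * t"
    then obtain t where "y = b * t" by blast
    then show "\<exists>t. y = a * t" using \<open>b = a * s\<close> by (intro exI[of _ "s * t"]) (simp add: mult.assoc)
  qed
qed

text \<open>An idempotent generating the same principal ideal as \<open>a\<close> is \<open>e(a)\<close>; no regularity
  is needed, since two idempotents generating the same ideal coincide.\<close>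

lemma eid_eqI:
  assumes e: "(e::'a::comm_ring_1) * e = e" and "a = e * r" and "e = a * s"
  shows "eid a = e"
  unfolding eid_def
proof (rule the_equality)
  show "e * e = e \<and> (\<forall>y. (\<exists>r. y = a * r) \<longleftrightarrow> (\<exists>r. y = e * r))"
    unfolding same_principal_ideal using assms by blast
next
  fix e' assume "e' * e' = e' \<and> (\<forall>y. (\<exists>r. y = a * r) \<longleftrightarrow> (\<exists>r. y = e' * r))"
  then obtain r' s' where e': "e' * e' = e'" "a = e' * r'" "e' = a * s'"
    unfolding same_principal_ideal by blast
  have e'_mult: "e' = e * (r * s')" by (simp add: e'(3) assms(2) mult.assoc)
  have e_mult: "e = e' * (r' * s)" by (simp add: e'(2) assms(3) mult.assoc)
  have "e * e' = e'"
    by (subst (1 2) e'_mult) (simp add: mult.assoc[symmetric] e)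
  moreover have "e' * e = e"
    by (subst (1 2) e_mult) (simp add: mult.assoc[symmetric] e'(1))
  ultimately show "e' = e" by (simp add: mult.commute)
qed

lemma regular_eid:
  assumes "regular_ring TYPE('a::comm_ring_1)"
  shows "eid (a::'a) * eid a = eid a" and "\<exists>r. a = eid a * r" and "\<exists>s. eid a = a * s"
proof -
  obtain e :: 'a where "e * e = e" and "\<forall>y. (\<exists>r. y = a * r) \<longleftrightarrow> (\<exists>r. y = e * r)"
    using assms[unfolded regular_ring_def, rule_format, of a] by blast
  moreover from this(2) obtain r s where "a = e * r" "e = a * s"
    unfolding same_principal_ideal by blast
  ultimately have e: "e * e = e" "a = e * r" "e = a * s" by blast+
  then have "eid a = e" by (rule eid_eqI)
  then show "eid a * eid a = eid a" "\<exists>r. a = eid a * r" "\<exists>s. eid a = a * s"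
    using e by blast+
qed

text \<open>In a regular ring \<open>e(a)\<close> and \<open>a\<close> have the same annihilator; this is how every
  statement about the idempotents \<open>e(x - y)\<close> is turned into one about elements.\<close>

lemma eid_annihilator:
  assumes "regular_ring TYPE('a::comm_ring_1)"
  shows "c * eid a = 0 \<longleftrightarrow> c * (a::'a) = 0"
proof -
  obtain r s where "a = eid a * r" "eid a = a * s" using regular_eid[OF assms] by blast
  then have "c * a = (c * eid a) * r" "c * eid a = (c * a) * s"
    by (metis mult.assoc)+
  then show ?thesis by auto
qed

lemma regular_reduced:
  assumes "regular_ring TYPE('a::comm_ring_1)" and "(z::'a) ^ K = 0"
  shows "z = 0"
proof (cases "K = 0")
  case True
  then show ?thesis using assms(2) by (metis mult_1_right mult_zero_right power_0)
next
  case False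
  obtain s where s: "eid z = z * s" using regular_eid[OF assms(1)] by blast
  have "eid z = eid z ^ K" using idem_power[OF regular_eid(1)[OF assms(1)]] False by simp
  also have "\<dots> = z ^ K * s ^ K" by (simp add: s power_mult_distrib)
  finally have "eid z * z = 0" using assms(2) by simp
  then have "eid z = 0"
    using eid_annihilator[OF assms(1), of "eid z" z] regular_eid(1)[OF assms(1), of z] by simp
  then show ?thesis using regular_eid(2)[OF assms(1), of z] by auto
qed

lemma eid_power:
  assumes a: "(a::'a::comm_ring_1) ^ (P + 1) = a" and "P \<ge> 1"
  shows "eid a = a ^ P"
proof (rule eid_eqI)
  have split: "a ^ P = a * a ^ (P - 1)" using \<open>P \<ge> 1\<close> by (simp add: power_eq_if)
  have "a ^ P * a ^ P = a ^ ((P + 1) + (P - 1))"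
    using \<open>P \<ge> 1\<close> by (simp add: power_add[symmetric])
  also have "\<dots> = a * a ^ (P - 1)" by (simp only: power_add[of a "P + 1" "P - 1"] a)
  finally show "a ^ P * a ^ P = a ^ P" using split by simp
  from a show "a = a ^ P * a" by (simp add: mult.commute)
  show "a ^ P = a * a ^ (P - 1)" by (rule split)
qed

definition idem_partition :: "'b set \<Rightarrow> ('b \<Rightarrow> 'a::comm_ring_1) \<Rightarrow> bool" where
  "idem_partition S E \<longleftrightarrow>
     (\<forall>f\<in>S. E f * E f = E f) \<and> (\<forall>f\<in>S. \<forall>g\<in>S. f \<noteq> g \<longrightarrow> E f * E g = 0) \<and> sum E S = 1"

lemma partition_eq:
  assumes "idem_partition S E" and "\<And>f. f \<in> S \<Longrightarrow> E f * x = E f * (y::'a::comm_ring_1)"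
  shows "x = y"
proof -
  have "x - y = sum E S * (x - y)" using assms(1) by (simp add: idem_partition_def)
  also have "\<dots> = (\<Sum>f\<in>S. E f * (x - y))" by (rule sum_distrib_right)
  also have "\<dots> = 0" using assms(2) by (simp add: right_diff_distrib)
  finally show ?thesis by simp
qed

lemma coeffs_ok_iff_partition: "coeffs_ok as \<longleftrightarrow> idem_partition {..<length as} ((!) as)"
  by (auto simp: coeffs_ok_def idem_partition_def idems_def sum_list_sum_nth atLeast0LessThan)

lemma sum_orthogonal_idems:
  assumes "finite J" "finite L" "J \<subseteq> K" "L \<subseteq> K"
    and "\<And>i. i \<in> K \<Longrightarrow> (a i::'a::comm_ring_1) * a i = a i"
    and "\<And>i j. i \<in> K \<Longrightarrow> j \<in> K \<Longrightarrow> i \<noteq> j \<Longrightarrow> a i * a j = 0"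
  shows "sum a J * sum a L = sum a (J \<inter> L)"
proof -
  have "sum a J * sum a L = (\<Sum>i\<in>J. \<Sum>j\<in>L. if j = i then a i else 0)"
    unfolding sum_product using assms(3-6) by (intro sum.cong refl) (auto simp: subset_iff)
  also have "\<dots> = sum a (J \<inter> L)"
    using assms(1,2) by (simp add: sum.inter_restrict Int_commute)
  finally show ?thesis .
qed

lemma partition_regroup:
  assumes "finite I" "finite F" "idem_partition I E" "g ` I \<subseteq> F"
  shows "idem_partition F (\<lambda>f. sum E {i\<in>I. g i = f})"
proof -
  have prod: "sum E {i\<in>I. g i = f} * sum E {i\<in>I. g i = f'}
      = sum E ({i\<in>I. g i = f} \<inter> {i\<in>I. g i = f'})" for f f'
    using assms(1,3) by (intro sum_orthogonal_idems[where K = I]) (auto simp: idem_partition_def)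
  have "(\<Sum>f\<in>F. sum E {i\<in>I. g i = f}) = sum E I"
    using sum.group[OF assms(1,2,4), of E] by (simp add: eq_commute)
  moreover have "{i\<in>I. g i = f} \<inter> {i\<in>I. g i = f'} = {}" if "f \<noteq> f'" for f f'
    using that by auto
  ultimately show ?thesis using assms(3) prod by (auto simp: idem_partition_def)
qed

lemma partition_product:
  assumes "finite I" "finite S" "\<And>i. i \<in> I \<Longrightarrow> idem_partition S (E i)"
  shows "idem_partition (PiE I (\<lambda>_. S)) (\<lambda>\<sigma>. \<Prod>i\<in>I. (E i (\<sigma> i)::'a::comm_ring_1))"
  unfolding idem_partition_def
proof (intro conjI ballI impI)
  fix \<sigma> assume s: "\<sigma> \<in> PiE I (\<lambda>_. S)"
  show "(\<Prod>i\<in>I. E i (\<sigma> i)) * (\<Prod>i\<in>I. E i (\<sigma> i)) = (\<Prod>i\<in>I. E i (\<sigma> i))"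
    using assms(3) PiE_mem[OF s] by (intro idem_prod) (auto simp: idem_partition_def)
next
  fix \<sigma> \<tau> assume s: "\<sigma> \<in> PiE I (\<lambda>_. S)" and t: "\<tau> \<in> PiE I (\<lambda>_. S)" and "\<sigma> \<noteq> \<tau>"
  then obtain i where i: "i \<in> I" "\<sigma> i \<noteq> \<tau> i" using PiE_ext by blast
  have "(\<Prod>i\<in>I. E i (\<sigma> i)) * (\<Prod>i\<in>I. E i (\<tau> i))
      = (E i (\<sigma> i) * E i (\<tau> i)) * ((\<Prod>j\<in>I - {i}. E j (\<sigma> j)) * (\<Prod>j\<in>I - {i}. E j (\<tau> j)))"
    using assms(1) i(1) by (simp add: prod.remove ac_simps)
  moreover have "E i (\<sigma> i) * E i (\<tau> i) = 0"
    using assms(3)[OF i(1)] i PiE_mem[OF s i(1)] PiE_mem[OF t i(1)] by (simp add: idem_partition_def)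
  ultimately show "(\<Prod>i\<in>I. E i (\<sigma> i)) * (\<Prod>i\<in>I. E i (\<tau> i)) = 0" by simp
next
  have "(\<Sum>\<sigma>\<in>PiE I (\<lambda>_. S). \<Prod>i\<in>I. E i (\<sigma> i)) = (\<Prod>i\<in>I. \<Sum>f\<in>S. E i f)"
    using prod_sum_PiE[OF assms(1), of "\<lambda>_. S" E] assms(2) by simp
  also have "\<dots> = 1" using assms(3) by (simp add: idem_partition_def)
  finally show "(\<Sum>\<sigma>\<in>PiE I (\<lambda>_. S). \<Prod>i\<in>I. E i (\<sigma> i)) = 1" .
qed

lemma product_piece_refines:
  assumes "finite I" "\<sigma> \<in> PiE I (\<lambda>_. S)" "i \<in> I" "\<And>i. i \<in> I \<Longrightarrow> idem_partition S (E i)"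
    and "E i (\<sigma> i) * x = E i (\<sigma> i) * (y::'a::comm_ring_1)"
  shows "(\<Prod>i\<in>I. E i (\<sigma> i)) * x = (\<Prod>i\<in>I. E i (\<sigma> i)) * y"
proof -
  have piece: "(\<Prod>i\<in>I. E i (\<sigma> i)) * E i (\<sigma> i) = (\<Prod>i\<in>I. E i (\<sigma> i))"
    using assms(4) PiE_mem[OF assms(2)]
    by (intro prod_factor_absorb[OF assms(1,3)]) (auto simp: idem_partition_def)
  then show ?thesis by (metis assms(5) mult.assoc)
qed

lemma convex_comb_of_partition:
  assumes "finite I" "idem_partition I C" "\<And>t. t \<in> I \<Longrightarrow> C t * d x (g t) = (0::'a::comm_ring_1)"
  shows "\<exists>xs as. set xs \<subseteq> g ` I \<and> length xs = length as \<and> coeffs_ok as \<and> convex_comb d x xs as"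
proof -
  obtain ix where ix: "set ix = I" "distinct ix" using finite_distinct_list[OF assms(1)] by blast
  have "coeffs_ok (map C ix)"
    unfolding coeffs_ok_def using assms(2) ix
    by (auto simp: idem_partition_def idems_def nth_eq_iff_index_eq sum_list_distinct_conv_sum_set)
  moreover have "convex_comb d x (map g ix) (map C ix)"
    unfolding convex_comb_def using assms(3) ix by auto
  ultimately show ?thesis using ix by (intro exI[of _ "map g ix"] exI[of _ "map C ix"]) auto
qed

definition locally_in :: "'a set \<Rightarrow> 'a::comm_ring_1 \<Rightarrow> bool" where
  "locally_in F a \<longleftrightarrow> (\<exists>E. idem_partition F E \<and> (\<forall>f\<in>F. E f * a = E f * f))"

lemma cfg_ring_locally_finite:
  assumes "cfg_ring TYPE('a::comm_ring_1)"
  shows "\<exists>F::'a set. finite F \<and> (\<forall>a. locally_in F a)"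
proof -
  have reg: "regular_ring TYPE('a)" using assms by (simp add: cfg_ring_def)
  obtain F :: "'a set" where F: "finite F" and
    cov: "\<forall>x. \<exists>xs as. set xs \<subseteq> F \<and> length xs = length as \<and> coeffs_ok as \<and>
               convex_comb (\<lambda>x y. eid (x - y)) x xs as"
    using assms unfolding cfg_ring_def cfg_space_def by auto
  have "locally_in F a" for a
  proof -
    obtain xs as where xs: "set xs \<subseteq> F" "length xs = length as" "coeffs_ok as"
       "convex_comb (\<lambda>x y. eid (x - y)) a xs as" using cov by blast
    let ?I = "{..<length as}"
    define E where "E f = sum ((!) as) {i\<in>?I. xs ! i = f}" for f
    have "idem_partition F E"
      unfolding E_def using xs(1-3) F
      by (intro partition_regroup) (auto simp: coeffs_ok_iff_partition)
    moreover have "E f * a = E f * f" for f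
    proof -
      have "as ! i * a = as ! i * xs ! i" if "i \<in> ?I" for i
      proof -
        have "as ! i * eid (a - xs ! i) = 0" using xs(4) that by (simp add: convex_comb_def)
        then show ?thesis by (simp add: eid_annihilator[OF reg] right_diff_distrib)
      qed
      then show ?thesis unfolding E_def sum_distrib_right by (intro sum.cong) auto
    qed
    ultimately show ?thesis unfolding locally_in_def by blast
  qed
  with F show ?thesis by blast
qed

lemma power_period:
  assumes "c * a ^ (d + 1) = c * (a::'a::comm_ring_1)"
  shows "c * a ^ (d * t + 1) = c * a"
proof (induction t)
  case (Suc t)
  have "c * a ^ (d * Suc t + 1) = (c * a ^ (d * t + 1)) * a ^ d"
    by (simp add: power_add[symmetric] mult.assoc add.commute add.left_commute)
  also have "\<dots> = c * a ^ (d + 1)" using Suc by (simp add: power_add mult.assoc)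
  finally show ?case using assms by simp
qed simp

text \<open>In a reduced ring, a coincidence of two powers on a piece \<open>c\<close> gives a periodicity
  that reaches down to the first power.\<close>

lemma power_coincidence:
  assumes reg: "regular_ring TYPE('a::comm_ring_1)"
    and "i < j" and eq: "c * a ^ (i + 1) = c * (a::'a) ^ (j + 1)"
  shows "c * a ^ (j - i + 1) = c * a"
proof -
  define d where "d = j - i"
  have "c * a ^ (i + 1) * (1 - a ^ d) = c * a ^ (i + 1) - c * a ^ ((i + 1) + d)"
    by (simp add: power_add right_diff_distrib mult.assoc)
  also have "(i + 1) + d = j + 1" using \<open>i < j\<close> by (simp add: d_def)
  finally have "c * a ^ (i + 1) * (1 - a ^ d) = 0" using eq by simp
  moreover have "(c * a * (1 - a ^ d)) ^ (i + 1) = (c * a ^ (i + 1) * (1 - a ^ d)) * (c * (1 - a ^ d)) ^ i"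
    by (simp add: power_mult_distrib ac_simps)
  ultimately have "(c * a * (1 - a ^ d)) ^ (i + 1) = 0" by simp
  then have "c * a * (1 - a ^ d) = 0" by (rule regular_reduced[OF reg])
  then show ?thesis by (simp add: d_def[symmetric] right_diff_distrib power_add mult.assoc)
qed

text \<open>Every power
  \<open>a, \<dots>, a^(k+1)\<close> (with \<open>k = |F|\<close>) is locally in \<open>F\<close>; on each piece of the common refinement two
  of these powers coincide, giving local periods \<open>\<le> k\<close>, all of which divide \<open>P = k!\<close>.\<close>

lemma power_identity:
  assumes reg: "regular_ring TYPE('a::comm_ring_1)"
    and F: "finite (F::'a set)" and loc: "\<And>a. locally_in F a"
  shows "\<exists>P\<ge>1. \<forall>a::'a. a ^ (P + 1) = a"
proof (intro exI conjI allI)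
  let ?k = "card F"
  let ?I = "{..<?k + 1}"
  fix a :: 'a
  have "\<forall>l. \<exists>E. idem_partition F E \<and> (\<forall>f\<in>F. E f * a ^ (l + 1) = E f * f)"
    using loc unfolding locally_in_def by blast
  then obtain E where E: "\<And>l. idem_partition F (E l) \<and> (\<forall>f\<in>F. E l f * a ^ (l + 1) = E l f * f)"
    by (metis choice)
  show "a ^ (fact ?k + 1) = a"
  proof (rule partition_eq[OF partition_product[of ?I F E]])
    fix \<sigma> assume s: "\<sigma> \<in> PiE ?I (\<lambda>_. F)"
    let ?C = "\<Prod>l\<in>?I. E l (\<sigma> l)"
    have C: "?C * a ^ (l + 1) = ?C * \<sigma> l" if "l \<in> ?I" for l
      using E PiE_mem[OF s that] by (intro product_piece_refines[OF _ s that]) auto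
    have "\<not> inj_on \<sigma> ?I"
    proof
      assume "inj_on \<sigma> ?I"
      then have "card ?I \<le> card F" using card_inj_on_le F PiE_mem[OF s] by blast
      then show False by simp
    qed
    then obtain i j where ij: "i \<in> ?I" "j \<in> ?I" "i < j" "\<sigma> i = \<sigma> j"
      unfolding inj_on_def by (metis linorder_neqE_nat)
    then have period: "?C * a ^ (j - i + 1) = ?C * a"
      using C by (intro power_coincidence[OF reg]) auto
    have "j - i dvd fact ?k" using ij by (intro dvd_fact) auto
    then obtain t where t: "fact ?k = (j - i) * t" by (rule dvdE)
    show "?C * a ^ (fact ?k + 1) = ?C * a" unfolding t by (rule power_period[OF period])
  qed (use E F in auto)
qed simp

lemma idem_eq_by_annihilator:
  assumes "e * e = e" "e' * e' = e'" and "\<And>c. c * e = 0 \<longleftrightarrow> c * e' = (0::'a::comm_ring_1)"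
  shows "e = e'"
proof -
  have "(1 - e) * e = 0" "(1 - e') * e' = 0" using assms(1,2) by (simp_all add: algebra_simps)
  then have "(1 - e) * e' = 0" "(1 - e') * e = 0" using assms(3) by blast+
  then show ?thesis by (simp add: algebra_simps)
qed

lemma bleq_iff_annihilates: "bleq a b \<longleftrightarrow> (1 - b) * a = (0::'a::comm_ring_1)"
  by (auto simp: bleq_def algebra_simps)

text \<open>\<open>agree x y\<close> is the largest idempotent on which \<open>x\<close> and \<open>y\<close> coincide; the metric of
  \<open>A^n\<close> is its complement.\<close>

definition agree :: "'a::comm_ring_1 ^ 'n \<Rightarrow> 'a ^ 'n \<Rightarrow> 'a" where
  "agree x y = (\<Prod>i\<in>UNIV. 1 - eid (x $ i - y $ i))"

lemma dvec_agree: "dvec x y = 1 - agree x y"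
proof -
  define g where "g i acc = bjoin (eid (x $ i - y $ i)) acc" for i acc
  interpret comp_fun_commute g
    by standard (auto simp: g_def bjoin_def fun_eq_iff algebra_simps)
  have "Finite_Set.fold g 0 S = 1 - (\<Prod>i\<in>S. 1 - eid (x $ i - y $ i))" if "finite S" for S
    using that
  proof (induction S rule: finite_induct)
    case (insert i S)
    have "Finite_Set.fold g 0 (insert i S) = g i (Finite_Set.fold g 0 S)"
      using insert(1,2) by (rule fold_insert)
    also have "\<dots> = g i (1 - (\<Prod>i\<in>S. 1 - eid (x $ i - y $ i)))" by (simp only: insert.IH)
    also have "\<dots> = 1 - (\<Prod>i\<in>insert i S. 1 - eid (x $ i - y $ i))"
      using insert(1,2) by (simp add: g_def bjoin_def algebra_simps)
    finally show ?case .
  qed simp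
  then show ?thesis unfolding dvec_def agree_def g_def[symmetric] by simp
qed

lemma agree_idem:
  assumes "regular_ring TYPE('a::comm_ring_1)"
  shows "agree x y * agree x y = (agree x y :: 'a)"
  unfolding agree_def by (intro idem_prod idem_compl regular_eid(1)[OF assms])

lemma dvec_idem:
  assumes "regular_ring TYPE('a::comm_ring_1)"
  shows "dvec x y * dvec x y = (dvec x y :: 'a)"
  using agree_idem[OF assms, of x y] by (simp add: dvec_agree idem_compl)

lemma agree_char:
  assumes reg: "regular_ring TYPE('a::comm_ring_1)"
  shows "c * agree x y = c \<longleftrightarrow> (\<forall>i. c * x $ i = c * (y $ i :: 'a))"
proof
  assume "\<forall>i. c * x $ i = c * y $ i"
  then have "c * eid (x $ i - y $ i) = 0" for i
    by (simp add: eid_annihilator[OF reg] right_diff_distrib)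
  then show "c * agree x y = c"
    unfolding agree_def by (intro prod_fixes) (simp add: right_diff_distrib)
next
  assume c: "c * agree x y = c"
  show "\<forall>i. c * x $ i = c * y $ i"
  proof
    fix i
    have "agree x y * (1 - eid (x $ i - y $ i)) = agree x y" unfolding agree_def
      by (rule prod_factor_absorb) (auto intro: idem_compl regular_eid(1)[OF reg])
    then have "c * agree x y * eid (x $ i - y $ i) = 0" by (simp add: algebra_simps)
    then have "c * eid (x $ i - y $ i) = 0" using c by simp
    then show "c * x $ i = c * y $ i" by (simp add: eid_annihilator[OF reg] right_diff_distrib)
  qed
qed

lemma agree_coincide:
  assumes reg: "regular_ring TYPE('a::comm_ring_1)"
  shows "agree x y * x $ i = agree x y * (y $ i :: 'a)"
  using agree_char[OF reg, of "agree x y" x y] agree_idem[OF reg] by blast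

lemma dvec_annihilator:
  assumes reg: "regular_ring TYPE('a::comm_ring_1)"
  shows "c * dvec x y = 0 \<longleftrightarrow> (\<forall>i. c * x $ i = c * (y $ i :: 'a))"
  by (auto simp: dvec_agree right_diff_distrib agree_char[OF reg, symmetric])

lemma convex_comb_dvec_iff:
  assumes reg: "regular_ring TYPE('a::comm_ring_1)"
  shows "convex_comb dvec x xs as \<longleftrightarrow>
    length xs = length as \<and> (\<forall>i<length as. \<forall>j. as ! i * x $ j = as ! i * (xs ! i $ j :: 'a))"
  by (simp add: convex_comb_def dvec_annihilator[OF reg])

lemma dvec_bleq_iff:
  assumes reg: "regular_ring TYPE('a::comm_ring_1)"
  shows "bleq (dvec x' y') (dvec x y) \<longleftrightarrow> (\<forall>j. agree x y * x' $ j = agree x y * (y' $ j :: 'a))"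
  by (simp add: bleq_iff_annihilates dvec_agree[of x y] dvec_annihilator[OF reg])

lemma bmetric_dvec:
  assumes reg: "regular_ring TYPE('a::comm_ring_1)"
  shows "bmetric_space (U :: ('a ^ 'n) set) dvec"
  unfolding bmetric_space_def
proof (intro conjI ballI)
  fix x y z :: "'a ^ 'n"
  show "dvec x y \<in> idems" using dvec_idem[OF reg] by (simp add: idems_def)
  show "dvec x y = 0 \<longleftrightarrow> x = y"
    using dvec_annihilator[OF reg, of 1 x y] by (simp add: vec_eq_iff)
  show "dvec x y = dvec y x"
    by (rule idem_eq_by_annihilator[OF dvec_idem[OF reg] dvec_idem[OF reg]])
      (auto simp: dvec_annihilator[OF reg])
  let ?c = "agree x y * agree y z"
  have "?c * x $ i = ?c * z $ i" for i
  proof -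
    have "?c * x $ i = agree y z * (agree x y * x $ i)" by (simp add: ac_simps)
    also have "\<dots> = agree y z * (agree x y * y $ i)" by (subst agree_coincide[OF reg]) (rule refl)
    also have "\<dots> = agree x y * (agree y z * y $ i)" by (simp add: ac_simps)
    also have "\<dots> = agree x y * (agree y z * z $ i)" by (subst agree_coincide[OF reg]) (rule refl)
    also have "\<dots> = ?c * z $ i" by (simp add: ac_simps)
    finally show ?thesis .
  qed
  then have "?c * dvec x z = 0" by (simp add: dvec_annihilator[OF reg])
  moreover have "1 - bjoin (dvec x y) (dvec y z) = ?c"
    by (simp add: bjoin_def dvec_agree algebra_simps)
  ultimately show "bleq (dvec x z) (bjoin (dvec x y) (dvec y z))"
    by (simp add: bleq_iff_annihilates)
qed

lemma poly_funs_local: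
  assumes "p \<in> poly_funs" and "\<And>i. c * x $ i = c * (y $ i::'a::comm_ring_1)"
  shows "c * p x = c * p y"
  using assms(1)
proof induction
  case (pf_add p q)
  then show ?case by (simp add: distrib_left)
next
  case (pf_mult p q)
  have "c * (p x * q x) = (c * p x) * q x" by (simp only: mult.assoc)
  also have "\<dots> = (c * p y) * q x" by (simp only: pf_mult.IH)
  also have "\<dots> = p y * (c * q x)" by (simp only: mult.assoc mult.left_commute)
  also have "\<dots> = p y * (c * q y)" by (simp only: pf_mult.IH)
  also have "\<dots> = c * (p y * q y)" by (simp only: mult.left_commute)
  finally show ?case .
qed (use assms(2) in auto)

lemma poly_funs_diff:
  assumes "p \<in> poly_funs" "q \<in> poly_funs"
  shows "(\<lambda>x. p x - q x) \<in> poly_funs"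
proof -
  have "(\<lambda>x. p x + (\<lambda>_. -1) x * q x) \<in> poly_funs" using assms by (intro poly_funs.intros)
  then show ?thesis by simp
qed

lemma poly_funs_power: "p \<in> poly_funs \<Longrightarrow> (\<lambda>x. p x ^ k) \<in> poly_funs"
  by (induction k) (simp_all add: poly_funs.intros)

lemma poly_funs_prod: "(\<And>i. i \<in> S \<Longrightarrow> f i \<in> poly_funs) \<Longrightarrow> (\<lambda>x. \<Prod>i\<in>S. f i x) \<in> poly_funs"
  by (induction S rule: infinite_finite_induct) (simp_all add: poly_funs.intros)

lemma poly_funs_sum: "(\<And>i. i \<in> S \<Longrightarrow> f i \<in> poly_funs) \<Longrightarrow> (\<lambda>x. \<Sum>i\<in>S. f i x) \<in> poly_funs"
  by (induction S rule: infinite_finite_induct) (simp_all add: poly_funs.intros)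

lemma agree_poly:
  assumes "\<And>a::'a::comm_ring_1. eid a = a ^ P"
  shows "(\<lambda>x. agree x u) \<in> (poly_funs :: ('a ^ 'n \<Rightarrow> 'a) set)"
  unfolding agree_def assms
  by (intro poly_funs_prod poly_funs_diff poly_funs_power poly_funs.intros)

lemma dvec_poly:
  assumes "\<And>a::'a::comm_ring_1. eid a = a ^ P"
  shows "(\<lambda>x. dvec x u) \<in> (poly_funs :: ('a ^ 'n \<Rightarrow> 'a) set)"
  unfolding dvec_agree by (intro poly_funs_diff poly_funs.intros agree_poly[OF assms])

definition comb :: "'a::comm_ring_1 list \<Rightarrow> ('a ^ 'n) list \<Rightarrow> 'a ^ 'n" where
  "comb as xs = (\<chi> j. \<Sum>l<length as. as ! l * xs ! l $ j)"

lemma comb_coord: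
  assumes "coeffs_ok as" "i < length as"
  shows "as ! i * comb as xs $ j = as ! i * xs ! i $ j"
proof -
  have idem: "as ! i * as ! i = as ! i" and orth: "\<And>l. l < length as \<Longrightarrow> l \<noteq> i \<Longrightarrow> as ! i * as ! l = 0"
    using assms by (auto simp: coeffs_ok_def idems_def)
  have "as ! i * comb as xs $ j = (\<Sum>l<length as. (as ! i * as ! l) * xs ! l $ j)"
    by (simp add: comb_def sum_distrib_left mult.assoc)
  also have "\<dots> = (\<Sum>l<length as. if l = i then as ! i * xs ! i $ j else 0)"
    using idem orth by (intro sum.cong refl) auto
  also have "\<dots> = as ! i * xs ! i $ j" using assms(2) by simp
  finally show ?thesis .
qed

lemma coeffs_ok_complement: "c * c = c \<Longrightarrow> coeffs_ok [c, 1 - (c::'a::comm_ring_1)]"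
  by (auto simp: coeffs_ok_def idems_def less_Suc_eq nth_Cons' algebra_simps)

lemma zero_set_comb:
  assumes "P \<subseteq> poly_funs" "coeffs_ok as" "length xs = length as"
    and coincide: "\<And>i j. i < length as \<Longrightarrow> as ! i * x $ j = as ! i * (xs ! i $ j::'a::comm_ring_1)"
    and kill: "\<And>i p. i < length as \<Longrightarrow> p \<in> P \<Longrightarrow> as ! i * p (xs ! i) = 0"
    and "p \<in> P"
  shows "p x = 0"
proof (rule partition_eq)
  show "idem_partition {..<length as} ((!) as)" using assms(2) by (simp add: coeffs_ok_iff_partition)
  fix i assume i: "i \<in> {..<length as}"
  have "p \<in> poly_funs" using assms(1,6) by blast
  then have "as ! i * p x = as ! i * p (xs ! i)"
    by (rule poly_funs_local) (use coincide i in simp)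
  also have "\<dots> = as ! i * 0" using kill i \<open>p \<in> P\<close> by simp
  finally show "as ! i * p x = as ! i * 0" .
qed

lemma variety_convex:
  assumes reg: "regular_ring TYPE('a::comm_ring_1)"
    and P: "P \<subseteq> poly_funs" and U: "U = {x::'a ^ 'n. \<forall>p\<in>P. p x = 0}"
  shows "bconvex U dvec"
  unfolding bconvex_def
proof (intro allI impI)
  fix xs as assume h: "set xs \<subseteq> U \<and> length xs = length as \<and> coeffs_ok (as::'a list)"
  have "p (comb as xs) = 0" if "p \<in> P" for p
  proof (rule zero_set_comb[OF P _ _ _ _ that])
    fix i assume i: "i < length as"
    then show "as ! i * comb as xs $ j = as ! i * xs ! i $ j" for j using h by (simp add: comb_coord)
    have "xs ! i \<in> U" using h i by auto
    then show "as ! i * q (xs ! i) = 0" if "q \<in> P" for q using that U by force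
  qed (use h in auto)
  then have "comb as xs \<in> U" using U by simp
  moreover have "convex_comb dvec (comb as xs) xs as"
    using h by (simp add: convex_comb_dvec_iff[OF reg] comb_coord)
  ultimately show "\<exists>x\<in>U. convex_comb dvec x xs as" by blast
qed

text \<open>If every element is locally in \<open>F\<close>, every vector is locally in \<open>F^n\<close>: refine the
  local partitions of its coordinates to their product.\<close>

lemma vector_locally_in:
  assumes F: "finite (F::'a::comm_ring_1 set)" "\<And>a. locally_in F a"
  obtains C where "idem_partition (PiE (UNIV::'n set) (\<lambda>_. F)) C"
    and "\<And>\<sigma> i. \<sigma> \<in> PiE UNIV (\<lambda>_. F) \<Longrightarrow> C \<sigma> * (x::'a ^ 'n) $ i = C \<sigma> * \<sigma> i"
proof -
  have "\<forall>i. \<exists>E. idem_partition F E \<and> (\<forall>f\<in>F. E f * x $ i = E f * f)"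
    using F(2) unfolding locally_in_def by blast
  then obtain E where E: "\<And>i. idem_partition F (E i) \<and> (\<forall>f\<in>F. E i f * x $ i = E i f * f)"
    by (metis choice)
  show ?thesis
  proof (rule that)
    show "idem_partition (PiE UNIV (\<lambda>_. F)) (\<lambda>\<sigma>. \<Prod>i\<in>UNIV. E i (\<sigma> i))"
      using F(1) E by (intro partition_product) auto
    fix \<sigma> :: "'n \<Rightarrow> 'a" and i assume s: "\<sigma> \<in> PiE UNIV (\<lambda>_. F)"
    have local: "E i (\<sigma> i) * x $ i = E i (\<sigma> i) * \<sigma> i" using E PiE_mem[OF s, of i] by blast
    show "(\<Prod>i\<in>UNIV. E i (\<sigma> i)) * x $ i = (\<Prod>i\<in>UNIV. E i (\<sigma> i)) * \<sigma> i"
      by (rule product_piece_refines[of UNIV \<sigma> F i E]) (use s local E in auto)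
  qed
qed

text \<open>\<open>satisfy P v\<close> is the largest idempotent on which \<open>v\<close> satisfies all equations of \<open>P\<close>.\<close>

definition satisfy :: "('a::comm_ring_1 ^ 'n \<Rightarrow> 'a) set \<Rightarrow> 'a ^ 'n \<Rightarrow> 'a" where
  "satisfy P v = (\<Prod>p\<in>P. 1 - eid (p v))"

lemma satisfy_idem:
  assumes "regular_ring TYPE('a::comm_ring_1)"
  shows "satisfy P v * satisfy P v = (satisfy P v :: 'a)"
  unfolding satisfy_def by (intro idem_prod idem_compl regular_eid(1)[OF assms])

lemma satisfy_char:
  assumes reg: "regular_ring TYPE('a::comm_ring_1)" and "finite P"
  shows "c * satisfy P v = c \<longleftrightarrow> (\<forall>p\<in>P. c * p v = (0::'a))"
proof
  assume "\<forall>p\<in>P. c * p v = 0"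
  then show "c * satisfy P v = c"
    unfolding satisfy_def by (intro prod_fixes) (simp add: eid_annihilator[OF reg] right_diff_distrib)
next
  assume c: "c * satisfy P v = c"
  show "\<forall>p\<in>P. c * p v = 0"
  proof
    fix p assume "p \<in> P"
    then have "satisfy P v * (1 - eid (p v)) = satisfy P v" unfolding satisfy_def
      by (intro prod_factor_absorb[OF assms(2)]) (auto intro: idem_compl regular_eid(1)[OF reg])
    then have "c * (1 - eid (p v)) = c" using coincide_below[OF c, of "1 - eid (p v)" 1] by simp
    then have "c * eid (p v) = 0" by (simp add: right_diff_distrib)
    then show "c * p v = 0" by (simp add: eid_annihilator[OF reg])
  qed
qed

text \<open>Gluing: the point equal to \<open>v\<close> where \<open>v\<close> satisfies the equations and to a point \<open>w\<close>
  of the variety elsewhere lies in the variety.\<close>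

lemma glue_in_variety:
  assumes reg: "regular_ring TYPE('a::comm_ring_1)"
    and P: "finite P" "P \<subseteq> poly_funs" and U: "U = {x::'a ^ 'n. \<forall>p\<in>P. p x = 0}"
    and w: "w \<in> U"
  shows "comb [satisfy P v, 1 - satisfy P v] [v, w] \<in> U"
proof -
  let ?c = "satisfy P v"
  have ok: "coeffs_ok [?c, 1 - ?c]" by (rule coeffs_ok_complement[OF satisfy_idem[OF reg]])
  have "p (comb [?c, 1 - ?c] [v, w]) = 0" if "p \<in> P" for p
  proof (rule zero_set_comb[OF P(2) ok _ _ _ that])
    show "[?c, 1 - ?c] ! i * comb [?c, 1 - ?c] [v, w] $ j = [?c, 1 - ?c] ! i * [v, w] ! i $ j"
      if "i < length [?c, 1 - ?c]" for i j
      using that by (rule comb_coord[OF ok])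
    fix i q assume i: "i < length [?c, 1 - ?c]" and q: "q \<in> P"
    have "?c * q v = 0" using q satisfy_char[OF reg P(1), of ?c v] satisfy_idem[OF reg] by auto
    moreover have "q w = 0" using q w U by blast
    moreover have "i = 0 \<or> i = 1" using i by auto
    ultimately show "[?c, 1 - ?c] ! i * q ([v, w] ! i) = 0" by auto
  qed simp
  then show ?thesis using U by simp
qed

text \<open>Every point of a nonempty variety is a convex combination of the finitely many glued
  points \<open>u \<sigma>\<close>, \<open>\<sigma> : n \<rightarrow> F\<close>, obtained from the points \<open>(\<sigma> i)\<^sub>i\<close>: on the product of the local
  partitions of its coordinates, the point coincides with \<open>(\<sigma> i)\<^sub>i\<close> and hence with \<open>u \<sigma>\<close>.\<close>

lemma variety_finitely_generated:
  assumes reg: "regular_ring TYPE('a::comm_ring_1)"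
    and F: "finite (F::'a set)" "\<And>a. locally_in F a"
    and P: "finite P" "P \<subseteq> poly_funs" and U: "U = {x::'a ^ 'n. \<forall>p\<in>P. p x = 0}"
    and u0: "u0 \<in> U"
  shows "\<exists>G. finite G \<and> G \<subseteq> U \<and>
           (\<forall>x\<in>U. \<exists>xs as. set xs \<subseteq> G \<and> length xs = length as \<and> coeffs_ok as \<and>
                           convex_comb dvec x xs as)"
proof -
  let ?I = "PiE (UNIV::'n set) (\<lambda>_. F)"
  define v where "v \<sigma> = (\<chi> i. \<sigma> i)" for \<sigma> :: "'n \<Rightarrow> 'a"
  define u where "u \<sigma> = comb [satisfy P (v \<sigma>), 1 - satisfy P (v \<sigma>)] [v \<sigma>, u0]" for \<sigma>
  have u_coord: "satisfy P (v \<sigma>) * u \<sigma> $ i = satisfy P (v \<sigma>) * v \<sigma> $ i" for \<sigma> i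
    using comb_coord[OF coeffs_ok_complement[OF satisfy_idem[OF reg, of P "v \<sigma>"]], of 0 "[v \<sigma>, u0]" i]
    by (simp add: u_def)
  have cover: "\<exists>xs as. set xs \<subseteq> u ` ?I \<and> length xs = length as \<and> coeffs_ok as \<and>
                         convex_comb dvec x xs as" if x: "x \<in> U" for x
  proof -
    obtain C where C: "idem_partition ?I C" "\<And>\<sigma> i. \<sigma> \<in> ?I \<Longrightarrow> C \<sigma> * x $ i = C \<sigma> * v \<sigma> $ i"
      using vector_locally_in[OF F, of x] unfolding v_def by auto
    have "C \<sigma> * dvec x (u \<sigma>) = 0" if s: "\<sigma> \<in> ?I" for \<sigma>
    proof -
      have "C \<sigma> * p (v \<sigma>) = 0" if p: "p \<in> P" for p
      proof -
        have "p \<in> poly_funs" using P(2) p by blast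
        then have "C \<sigma> * p (v \<sigma>) = C \<sigma> * p x" by (rule poly_funs_local) (simp add: C(2)[OF s])
        also have "\<dots> = 0" using x p U by force
        finally show ?thesis .
      qed
      then have "C \<sigma> * satisfy P (v \<sigma>) = C \<sigma>" by (simp add: satisfy_char[OF reg P(1)])
      then have "C \<sigma> * u \<sigma> $ i = C \<sigma> * x $ i" for i
        using coincide_below[OF _ u_coord] C(2)[OF s] by simp
      then show ?thesis by (simp add: dvec_annihilator[OF reg])
    qed
    with C(1) show ?thesis
      using F(1) by (intro convex_comb_of_partition) (auto simp: finite_PiE)
  qed
  have "u ` ?I \<subseteq> U" unfolding u_def using glue_in_variety[OF reg P U u0] by blast
  moreover have "finite (u ` ?I)" using F(1) by (simp add: finite_PiE)
  ultimately show ?thesis using cover by (intro exI[of _ "u ` ?I"]) simp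
qed

lemma variety_cfg_space:
  assumes reg: "regular_ring TYPE('a::comm_ring_1)"
    and F: "finite (F::'a set)" "\<And>a. locally_in F a"
    and "algebraic_variety (U::('a ^ 'n) set)"
  shows "cfg_space U dvec"
proof -
  obtain P where P: "finite P" "P \<subseteq> poly_funs" "U = {x. \<forall>p\<in>P. p x = 0}"
    using assms(4) by (auto simp: algebraic_variety_def)
  have "\<exists>G. finite G \<and> G \<subseteq> U \<and>
          (\<forall>x\<in>U. \<exists>xs as. set xs \<subseteq> G \<and> length xs = length as \<and> coeffs_ok as \<and>
                          convex_comb dvec x xs as)"
  proof (cases "U = {}")
    case False
    then obtain u0 where "u0 \<in> U" by blast
    then show ?thesis by (rule variety_finitely_generated[OF reg F P])
  qed auto
  then show ?thesis
    using bmetric_dvec[OF reg] variety_convex[OF reg P(2,3)] by (simp add: cfg_space_def)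
qed

text \<open>Disjointification of a sequence of idempotents \<open>q 0, q 1, \<dots>\<close>: the pieces
  \<open>q i (1 - q 0) \<cdots> (1 - q (i - 1))\<close> are pairwise orthogonal and cover the join.\<close>

definition disjointify :: "(nat \<Rightarrow> 'a::comm_ring_1) \<Rightarrow> nat \<Rightarrow> 'a" where
  "disjointify q i = q i * (\<Prod>l<i. 1 - q l)"

lemma disjointify_sum: "(\<Sum>i<n. disjointify q i) = 1 - (\<Prod>l<n. 1 - q l)"
  by (induction n) (simp_all add: disjointify_def algebra_simps)

lemma disjointify_below:
  assumes "q i * q i = q i" shows "disjointify q i * q i = disjointify q i"
  using assms by (simp add: disjointify_def ac_simps mult.assoc[symmetric])

lemma disjointify_coeffs_ok:
  assumes idem: "\<And>i. i < n \<Longrightarrow> q i * q i = (q i :: 'a::comm_ring_1)"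
    and cover: "(\<Prod>l<n. 1 - q l) = 0"
  shows "coeffs_ok (map (disjointify q) [0..<n])"
proof -
  have orth: "disjointify q i * disjointify q j = 0" if "i < j" "j < n" for i j
  proof -
    have "(\<Prod>l<j. 1 - q l) * (1 - q i) = (\<Prod>l<j. 1 - q l)"
      using that idem by (intro prod_factor_absorb) (auto intro: idem_compl)
    then have "disjointify q j * (1 - q i) = disjointify q j"
      by (simp add: disjointify_def mult.assoc)
    moreover have "disjointify q i * q i = disjointify q i"
      using that idem by (intro disjointify_below) simp
    ultimately have "disjointify q i * disjointify q j
        = (disjointify q i * disjointify q j) * (q i * (1 - q i))"
      by (metis mult.assoc mult.left_commute)
    then show ?thesis using idem[of i] that by (simp add: algebra_simps)
  qed
  have "disjointify q i * disjointify q i = disjointify q i" if "i < n" for i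
    unfolding disjointify_def using that idem
    by (intro idem_mult idem_prod) (auto intro: idem_compl)
  moreover have "sum_list (map (disjointify q) [0..<n]) = 1"
    using disjointify_sum[of q n] cover by (simp add: sum_list_sum_nth atLeast0LessThan)
  ultimately show ?thesis
    unfolding coeffs_ok_def using orth by (auto simp: idems_def) (metis linorder_neqE_nat mult.commute)
qed

lemma disjointify_poly:
  assumes "\<And>l. (\<lambda>x. q x l) \<in> poly_funs"
  shows "(\<lambda>x. disjointify (q x) i) \<in> poly_funs"
  unfolding disjointify_def by (intro poly_funs.intros poly_funs_prod poly_funs_diff assms)

lemma cfg_space_generators:
  assumes "cfg_space U d"
  obtains us where "set us \<subseteq> U"
    and "\<And>x. x \<in> U \<Longrightarrow> \<exists>xs as. set xs \<subseteq> set us \<and> length xs = length as \<and> coeffs_ok as \<and>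
                                convex_comb d x xs as"
proof -
  obtain G where G: "finite G" "G \<subseteq> U"
    "\<forall>x\<in>U. \<exists>xs as. set xs \<subseteq> G \<and> length xs = length as \<and> coeffs_ok as \<and> convex_comb d x xs as"
    using assms unfolding cfg_space_def by blast
  obtain us where us: "set us = G" using G(1) finite_list by blast
  show ?thesis
  proof (rule that)
    show "set us \<subseteq> U" using us G(2) by simp
    show "\<exists>xs as. set xs \<subseteq> set us \<and> length xs = length as \<and> coeffs_ok as \<and> convex_comb d x xs as"
      if "x \<in> U" for x
      unfolding us by (rule G(3)[rule_format, OF that])
  qed
qed

lemma convex_comb_unique:
  assumes reg: "regular_ring TYPE('a::comm_ring_1)" and "coeffs_ok as"
    and "convex_comb dvec x xs as" "convex_comb dvec y xs as"
  shows "x = (y :: 'a ^ 'n)"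
  unfolding vec_eq_iff
proof (intro allI, rule partition_eq)
  show "idem_partition {..<length as} ((!) as)" using assms(2) by (simp add: coeffs_ok_iff_partition)
  show "as ! i * x $ j = as ! i * y $ j" if "i \<in> {..<length as}" for i j
    using assms(3,4) that by (simp add: convex_comb_dvec_iff[OF reg])
qed

text \<open>A point is a convex combination of points of a list \<open>us\<close> exactly when the product of
  its distances to them vanishes; the coefficients can then be taken to be the
  disjointified agreement idempotents.\<close>

lemma convex_comb_dvec_prod:
  assumes reg: "regular_ring TYPE('a::comm_ring_1)"
    and "set xs \<subseteq> set us" "coeffs_ok as" "convex_comb dvec x xs as"
  shows "(\<Prod>l<length us. dvec x (us ! l)) = (0::'a)"
proof (rule partition_eq)
  show "idem_partition {..<length as} ((!) as)" using assms(3) by (simp add: coeffs_ok_iff_partition)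
  fix i assume i: "i \<in> {..<length as}"
  have len: "length xs = length as" using assms(4) by (simp add: convex_comb_def)
  then obtain l where l: "l < length us" "us ! l = xs ! i"
    using assms(2) i by (metis in_set_conv_nth lessThan_iff nth_mem subsetD)
  have "(\<Prod>l<length us. dvec x (us ! l)) = dvec x (xs ! i) * (\<Prod>k\<in>{..<length us} - {l}. dvec x (us ! k))"
    using l by (simp add: prod.remove)
  moreover have "as ! i * dvec x (xs ! i) = 0" using assms(4) i by (simp add: convex_comb_def)
  ultimately show "as ! i * (\<Prod>l<length us. dvec x (us ! l)) = as ! i * 0"
    by (simp add: mult.assoc[symmetric])
qed

lemma convex_comb_by_agreement:
  assumes reg: "regular_ring TYPE('a::comm_ring_1)"
    and "(\<Prod>l<length us. dvec x (us ! l)) = (0::'a)"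
  defines "cs \<equiv> map (disjointify (\<lambda>l. agree x (us ! l))) [0..<length us]"
  shows "coeffs_ok cs" and "convex_comb dvec x us cs"
proof -
  show "coeffs_ok cs"
    unfolding cs_def using assms(2) by (intro disjointify_coeffs_ok agree_idem[OF reg]) (simp add: dvec_agree)
  have "disjointify (\<lambda>l. agree x (us ! l)) i * dvec x (us ! i) = 0" for i
    using disjointify_below[of "\<lambda>l. agree x (us ! l)" i, OF agree_idem[OF reg]]
    by (simp add: dvec_agree right_diff_distrib)
  then show "convex_comb dvec x us cs" by (simp add: cs_def convex_comb_def)
qed

text \<open>Second half of part (1): a CFG-subspace of \<open>A^n\<close> is the zero set of the single polynomial \<open>\<Prod> d(x, u\<^sub>l)\<close>.\<close>

lemma cfg_space_variety:
  assumes reg: "regular_ring TYPE('a::comm_ring_1)" and P: "\<And>a::'a. eid a = a ^ P"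
    and cfg: "cfg_space (U::('a ^ 'n) set) dvec"
  shows "algebraic_variety U"
proof -
  obtain us where us: "set us \<subseteq> U"
    "\<And>x. x \<in> U \<Longrightarrow> \<exists>xs as. set xs \<subseteq> set us \<and> length xs = length as \<and> coeffs_ok as \<and>
                             convex_comb dvec x xs as"
    using cfg_space_generators[OF cfg] by blast
  define p where "p x = (\<Prod>l<length us. dvec x (us ! l))" for x
  have "U = {x. p x = 0}"
  proof (intro equalityI subsetI)
    fix x assume "x \<in> U"
    then obtain xs as where "set xs \<subseteq> set us" "coeffs_ok as" "convex_comb dvec x xs as"
      using us(2) by blast
    then show "x \<in> {x. p x = 0}" by (simp add: p_def convex_comb_dvec_prod[OF reg])
  next
    fix x assume "x \<in> {x. p x = 0}"
    then have p0: "(\<Prod>l<length us. dvec x (us ! l)) = 0" by (simp add: p_def)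
    let ?cs = "map (disjointify (\<lambda>l. agree x (us ! l))) [0..<length us]"
    have "bconvex U dvec" using cfg by (simp add: cfg_space_def)
    then have "\<exists>y\<in>U. convex_comb dvec y us ?cs"
      unfolding bconvex_def using us(1) convex_comb_by_agreement(1)[OF reg p0]
      by (elim allE[of _ us] allE[of _ ?cs]) simp
    then obtain y where "y \<in> U" "convex_comb dvec y us ?cs" by blast
    moreover have "x = y"
      using convex_comb_by_agreement[OF reg p0] calculation(2) by (rule convex_comb_unique[OF reg])
    ultimately show "x \<in> U" by simp
  qed
  moreover have "p \<in> poly_funs" unfolding p_def by (intro poly_funs_prod dvec_poly[OF P])
  ultimately show ?thesis unfolding algebraic_variety_def by (intro exI[of _ "{p}"]) auto
qed

text \<open>Part (2), first direction: polynomial maps are contractive, since polynomials are local.\<close>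

lemma polynomial_map_contractive:
  assumes reg: "regular_ring TYPE('a::comm_ring_1)" and "polynomial_map U (f :: 'a ^ 'n \<Rightarrow> 'a ^ 'm)"
    and "x \<in> U" "y \<in> U"
  shows "bleq (dvec (f x) (f y)) (dvec x y)"
proof -
  obtain p where p: "\<And>j. p j \<in> poly_funs" "\<And>x j. x \<in> U \<Longrightarrow> f x $ j = p j x"
    using assms(2) by (auto simp: polynomial_map_def)
  have "agree x y * p j x = agree x y * p j y" for j
    using p(1) by (rule poly_funs_local) (rule agree_coincide[OF reg])
  then show ?thesis using assms(3,4) by (simp add: dvec_bleq_iff[OF reg] p(2))
qed

text \<open>Part (2), converse: a contractive map on a CFG-subspace is given on it by the polynomials
  \<open>\<Sum>\<^sub>l disjointify (agree x u\<^sub>l) \<cdot> f(u\<^sub>l)\<close>: on each piece \<open>x\<close> agrees with \<open>u\<^sub>l\<close>,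
  hence \<open>f x\<close> agrees with \<open>f u\<^sub>l\<close>.\<close>

lemma contractive_polynomial_map:
  assumes reg: "regular_ring TYPE('a::comm_ring_1)" and P: "\<And>a::'a. eid a = a ^ P"
    and cfg: "cfg_space (U::('a ^ 'n) set) dvec"
    and contr: "\<forall>x\<in>U. \<forall>y\<in>U. bleq (dvec (f x) (f y)) (dvec x y)"
  shows "polynomial_map U (f :: 'a ^ 'n \<Rightarrow> 'a ^ 'm)"
proof -
  obtain us where us: "set us \<subseteq> U"
    "\<And>x. x \<in> U \<Longrightarrow> \<exists>xs as. set xs \<subseteq> set us \<and> length xs = length as \<and> coeffs_ok as \<and>
                             convex_comb dvec x xs as"
    using cfg_space_generators[OF cfg] by blast
  define cs where "cs x = map (disjointify (\<lambda>l. agree x (us ! l))) [0..<length us]" for x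
  define p where "p j x = comb (cs x) (map f us) $ j" for j x
  have "p j = (\<lambda>x. \<Sum>l<length us. disjointify (\<lambda>l. agree x (us ! l)) l * f (us ! l) $ j)" for j
    unfolding p_def comb_def cs_def by (auto intro!: sum.cong)
  then have "p j \<in> poly_funs" for j
    by (simp only:) (intro poly_funs_sum poly_funs.intros disjointify_poly agree_poly[OF P])
  moreover have "f x $ j = p j x" if x: "x \<in> U" for x j
  proof (rule partition_eq)
    have p0: "(\<Prod>l<length us. dvec x (us ! l)) = 0"
      using us(2)[OF x] convex_comb_dvec_prod[OF reg] by blast
    note cs = convex_comb_by_agreement[OF reg p0, folded cs_def]
    show "idem_partition {..<length (cs x)} ((!) (cs x))" using cs(1) by (simp add: coeffs_ok_iff_partition)
    fix i assume i: "i \<in> {..<length (cs x)}"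
    then have u: "us ! i \<in> U" using us(1) by (auto simp: cs_def)
    have "cs x ! i * agree x (us ! i) = cs x ! i"
      using i disjointify_below[OF agree_idem[OF reg]] by (simp add: cs_def)
    moreover have "agree x (us ! i) * f x $ j = agree x (us ! i) * f (us ! i) $ j"
      using contr x u unfolding dvec_bleq_iff[OF reg] by blast
    ultimately have "cs x ! i * f x $ j = cs x ! i * f (us ! i) $ j" by (rule coincide_below)
    also have "\<dots> = cs x ! i * p j x"
      using comb_coord[OF cs(1) i[simplified], of "map f us" j] i by (simp add: p_def cs_def)
    finally show "cs x ! i * f x $ j = cs x ! i * p j x" .
  qed
  ultimately show ?thesis unfolding polynomial_map_def by blast
qed

text \<open>The main theorem: by the power identity \<open>e(a) = a^P\<close> and local finiteness, parts (1) and
  (2) follow from the lemmas above.\<close>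

theorem mainTheorem1:
  assumes "cfg_ring TYPE('a::comm_ring_1)"
  shows "(\<forall>U :: ('a ^ 'n) set. algebraic_variety U \<longleftrightarrow> cfg_space U dvec) \<and>
         (\<forall>(U :: ('a ^ 'n) set) (V :: ('a ^ 'm) set) (f :: 'a ^ 'n \<Rightarrow> 'a ^ 'm).
            algebraic_variety U \<longrightarrow> algebraic_variety V \<longrightarrow> f ` U \<subseteq> V \<longrightarrow>
            (polynomial_map U f \<longleftrightarrow> (\<forall>x\<in>U. \<forall>y\<in>U. bleq (dvec (f x) (f y)) (dvec x y))))"
proof -
  have reg: "regular_ring TYPE('a)" using assms by (simp add: cfg_ring_def)
  obtain F :: "'a set" where F: "finite F" "\<And>a. locally_in F a"
    using cfg_ring_locally_finite[OF assms] by blast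
  obtain P where "P \<ge> 1" "\<And>a::'a. a ^ (P + 1) = a"
    using power_identity[OF reg F] by blast
  then have eid_P: "\<And>a::'a. eid a = a ^ P" by (simp add: eid_power)
  have variety_iff: "algebraic_variety U \<longleftrightarrow> cfg_space U dvec" for U :: "('a ^ 'n) set"
    using variety_cfg_space[OF reg F] cfg_space_variety[OF reg eid_P] by blast
  have "polynomial_map U f \<longleftrightarrow> (\<forall>x\<in>U. \<forall>y\<in>U. bleq (dvec (f x) (f y)) (dvec x y))"
    if "algebraic_variety U" for U :: "('a ^ 'n) set" and f :: "'a ^ 'n \<Rightarrow> 'a ^ 'm"
    using polynomial_map_contractive[OF reg]
      contractive_polynomial_map[OF reg eid_P variety_cfg_space[OF reg F that]] by blast
  with variety_iff show ?thesis by blast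
qed

end
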